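(* If two signed graphs $SG_1$ and $SG_2$ are equivalent, then for every $i$, $H^i(SG_1)\cong H^i(SG_2)$ and $H^i_b(SG_1)\cong H^i_b(SG_2)$ as graded abelian groups.
   Context: Signed graphs: $SG=(G,\sigma)$, $G$ finite (loops, multiple edges allowed), $\sigma:E(G)\to\{\pm1\}$. Vertex switching at $v$ negates the sign of every non-loop edge incident to $v$ (loops keep their sign). Two signed graphs are equivalent if they are related by finitely many vertex switchings (on the same underlying graph). Negative circuit: product of edge signs $-1$; balanced = no negative circuit. $[G:s]$, $[SG:s]$: spanning subgraph with edge set $s$. Complexes: Fix a total order on $E(G)$. An enhanced state of $G$ is $S=(s,c)$, $c$ labels each component of $[G:s]$ by $1$ or $x$; $j(S)$ = number of $x$-labels (grading). With $m(1,1)=1$, $m(1,x)=m(x,1)=x$, $m(x,x)=0$: for $e\notin s$, $S_e=(s\cup\{e\},c_e)$ where a component containing both ends of $e$ keeps its label and if $e$ joins components $E_i,E_j$ the merged one gets $m(c(E_i),c(E_j))$ ($S_e=0$ if both are $x$). $d(S)=\sum_{e\notin s}(-1)^{n(e)}S_e$, $n(e)$ = number of edges of $s$ preceding $e$. $H^i(SG)$: cohomology of $C^\bullet(SG)$, free on enhanced states whose $c$ assigns $1$ to every unbalanced component of $[SG:s]$, differential $d_s=f\circ d$ with $f$ projecting onto these states. $H^i_b(SG)$: cohomology of $C^\bullet_b(SG)$, free on enhanced states with $[SG:s]$ balanced, differential $d_b=f_b\circ d$, $f_b$ the analogous projection. *)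

theory Defs
  imports "HOL-Algebra.Algebra"
begin

(* A finite graph (loops and multiple edges allowed): vertex set V, edge set E,
   ends e = set of end vertices of e (one vertex for a loop, two otherwise). The total order on E(G) is the order of the type 'e. *)

definition signed_graph :: "'v set \<Rightarrow> 'e set \<Rightarrow> ('e \<Rightarrow> 'v set) \<Rightarrow> ('e \<Rightarrow> int) \<Rightarrow> bool" where
  "signed_graph V E ends \<sigma> \<longleftrightarrow> finite V \<and> finite E \<and>
     (\<forall>e\<in>E. ends e \<subseteq> V \<and> ends e \<noteq> {} \<and> card (ends e) \<le> 2 \<and> (\<sigma> e = 1 \<or> \<sigma> e = -1))"

definition switch :: "'e set \<Rightarrow> ('e \<Rightarrow> 'v set) \<Rightarrow> 'v \<Rightarrow> ('e \<Rightarrow> int) \<Rightarrow> ('e \<Rightarrow> int)" where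
  "switch E ends v \<sigma> = (\<lambda>e. if e \<in> E \<and> v \<in> ends e \<and> card (ends e) = 2 then - \<sigma> e else \<sigma> e)"

definition sg_equiv :: "'v set \<Rightarrow> 'e set \<Rightarrow> ('e \<Rightarrow> 'v set) \<Rightarrow> ('e \<Rightarrow> int) \<Rightarrow> ('e \<Rightarrow> int) \<Rightarrow> bool" where
  "sg_equiv V E ends \<sigma>1 \<sigma>2 \<longleftrightarrow> (\<lambda>\<tau> \<tau>'. \<exists>v\<in>V. \<tau>' = switch E ends v \<tau>)\<^sup>*\<^sup>* \<sigma>1 \<sigma>2"

definition conn_rel :: "'v set \<Rightarrow> ('e \<Rightarrow> 'v set) \<Rightarrow> 'e set \<Rightarrow> ('v \<times> 'v) set" where
  "conn_rel V ends s = {(u, w). u \<in> V \<and> w \<in> V \<and>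
      (\<lambda>a b. \<exists>e\<in>s. ends e = {a, b})\<^sup>*\<^sup>* u w}"

definition comps :: "'v set \<Rightarrow> ('e \<Rightarrow> 'v set) \<Rightarrow> 'e set \<Rightarrow> 'v set set" where
  "comps V ends s = V // conn_rel V ends s"

definition comp_of :: "'v set \<Rightarrow> ('e \<Rightarrow> 'v set) \<Rightarrow> 'e set \<Rightarrow> 'v \<Rightarrow> 'v set" where
  "comp_of V ends s u = conn_rel V ends s `` {u}"

(* a circuit in [G:s]: distinct edges es and distinct vertices vs, es!i joining vs!i and vs!(i+1 mod k);
   k = 1 is a loop, k = 2 a pair of parallel edges *)
definition is_circuit :: "('e \<Rightarrow> 'v set) \<Rightarrow> 'e set \<Rightarrow> 'e list \<Rightarrow> 'v list \<Rightarrow> bool" where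
  "is_circuit ends s es vs \<longleftrightarrow> es \<noteq> [] \<and> length es = length vs \<and> distinct es \<and> distinct vs \<and>
     set es \<subseteq> s \<and> (\<forall>i<length es. ends (es ! i) = {vs ! i, vs ! ((i + 1) mod length vs)})"

definition negative_circuit :: "('e \<Rightarrow> 'v set) \<Rightarrow> ('e \<Rightarrow> int) \<Rightarrow> 'e set \<Rightarrow> 'e list \<Rightarrow> 'v list \<Rightarrow> bool" where
  "negative_circuit ends \<sigma> s es vs \<longleftrightarrow> is_circuit ends s es vs \<and> prod_list (map \<sigma> es) = -1"

definition balanced_comp :: "('e \<Rightarrow> 'v set) \<Rightarrow> ('e \<Rightarrow> int) \<Rightarrow> 'e set \<Rightarrow> 'v set \<Rightarrow> bool" where
  "balanced_comp ends \<sigma> s K \<longleftrightarrow> \<not> (\<exists>es vs. negative_circuit ends \<sigma> s es vs \<and> set vs \<subseteq> K)"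

definition balanced_sub :: "('e \<Rightarrow> 'v set) \<Rightarrow> ('e \<Rightarrow> int) \<Rightarrow> 'e set \<Rightarrow> bool" where
  "balanced_sub ends \<sigma> s \<longleftrightarrow> \<not> (\<exists>es vs. negative_circuit ends \<sigma> s es vs)"

(* An enhanced state (s, c): s a set of edges, c the set of components of [G:s] labelled x
   (all other components are labelled 1). *)
type_synonym ('e, 'v) estate = "'e set \<times> 'v set set"

definition enh_states :: "'v set \<Rightarrow> 'e set \<Rightarrow> ('e \<Rightarrow> 'v set) \<Rightarrow> ('e, 'v) estate set" where
  "enh_states V E ends = {(s, c). s \<subseteq> E \<and> c \<subseteq> comps V ends s}"

(* S_e for e not in s (None encodes S_e = 0, which happens when two x-components merge) *)
definition state_step :: "'v set \<Rightarrow> ('e \<Rightarrow> 'v set) \<Rightarrow> 'e \<Rightarrow> ('e, 'v) estate \<Rightarrow> ('e, 'v) estate option" where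
  "state_step V ends e S = (let s = fst S; c = snd S;
      K1 = comp_of V ends s (SOME u. u \<in> ends e);
      K2 = comp_of V ends s (SOME w. w \<in> ends e \<and> (card (ends e) = 2 \<longrightarrow> w \<noteq> (SOME u. u \<in> ends e)))
    in if K1 = K2 then Some (insert e s, c)
       else if K1 \<in> c \<and> K2 \<in> c then None
       else Some (insert e s, {K \<in> c. K \<noteq> K1 \<and> K \<noteq> K2} \<union>
                               (if K1 \<in> c \<or> K2 \<in> c then {K1 \<union> K2} else {})))"

definition n_prec :: "'e::linorder set \<Rightarrow> 'e \<Rightarrow> nat" where
  "n_prec s e = card {e' \<in> s. e' < e}"

(* coefficient of T in d(S) = sum over e not in s of (-1)^n(e) S_e *)
definition dcoef :: "'v set \<Rightarrow> 'e::linorder set \<Rightarrow> ('e \<Rightarrow> 'v set) \<Rightarrow> ('e, 'v) estate \<Rightarrow> ('e, 'v) estate \<Rightarrow> int" where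
  "dcoef V E ends S T = (\<Sum>e \<in> E - fst S. if state_step V ends e S = Some T then (-1) ^ n_prec (fst S) e else 0)"

(* cochain group of bidegree (i,j): free abelian group on the states in A with |s| = i, j(S) = j;
   elements are integer-valued functions supported there, with pointwise addition *)
definition cochains :: "('e, 'v) estate set \<Rightarrow> int \<Rightarrow> nat \<Rightarrow> (('e, 'v) estate \<Rightarrow> int) monoid" where
  "cochains A i j = \<lparr> carrier = {\<phi>. \<forall>S. \<phi> S \<noteq> 0 \<longrightarrow> S \<in> A \<and> int (card (fst S)) = i \<and> card (snd S) = j},
                      monoid.mult = (\<lambda>\<phi> \<psi> S. \<phi> S + \<psi> S), monoid.one = (\<lambda>_. 0) \<rparr>"

(* differential f o d, with f the projection onto the states in A *)
definition dmap :: "'v set \<Rightarrow> 'e::linorder set \<Rightarrow> ('e \<Rightarrow> 'v set) \<Rightarrow> ('e, 'v) estate set \<Rightarrow>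
                    (('e, 'v) estate \<Rightarrow> int) \<Rightarrow> (('e, 'v) estate \<Rightarrow> int)" where
  "dmap V E ends A \<phi> = (\<lambda>T. if T \<in> A then (\<Sum>S\<in>A. \<phi> S * dcoef V E ends S T) else 0)"

definition cohom :: "'v set \<Rightarrow> 'e::linorder set \<Rightarrow> ('e \<Rightarrow> 'v set) \<Rightarrow> ('e, 'v) estate set \<Rightarrow> int \<Rightarrow> nat \<Rightarrow>
                     (('e, 'v) estate \<Rightarrow> int) set monoid" where
  "cohom V E ends A i j =
     ((cochains A i j)\<lparr>carrier := {\<phi> \<in> carrier (cochains A i j). dmap V E ends A \<phi> = (\<lambda>_. 0)}\<rparr>)
       Mod (dmap V E ends A ` carrier (cochains A (i - 1) j))"

(* basis of C(SG): states whose c assigns 1 to every unbalanced component *)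
definition states_s :: "'v set \<Rightarrow> 'e set \<Rightarrow> ('e \<Rightarrow> 'v set) \<Rightarrow> ('e \<Rightarrow> int) \<Rightarrow> ('e, 'v) estate set" where
  "states_s V E ends \<sigma> = {S \<in> enh_states V E ends. \<forall>K \<in> snd S. balanced_comp ends \<sigma> (fst S) K}"

(* basis of C_b(SG): states with [SG:s] balanced *)
definition states_b :: "'v set \<Rightarrow> 'e set \<Rightarrow> ('e \<Rightarrow> 'v set) \<Rightarrow> ('e \<Rightarrow> int) \<Rightarrow> ('e, 'v) estate set" where
  "states_b V E ends \<sigma> = {S \<in> enh_states V E ends. balanced_sub ends \<sigma> (fst S)}"

definition H_s where "H_s V E ends \<sigma> i j = cohom V E ends (states_s V E ends \<sigma>) i j"
definition H_b where "H_b V E ends \<sigma> i j = cohom V E ends (states_b V E ends \<sigma>) i j"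

end

theory Submission
  imports Defs
begin

text \<open>Switching at \<open>v\<close> multiplies the sign of an edge by \<open>-1\<close> once for each of its ends
  equal to \<open>v\<close>. Along a circuit every vertex is an end of exactly two consecutive edges, so
  the sign of every circuit, and hence the balance of every \<open>[SG:s]\<close> and of each of its
  components, is invariant under switching. The differential does not depend on the signature,
  so equivalent signed graphs have literally the same complexes \<open>C(SG)\<close> and \<open>C\<^sub>b(SG)\<close>.\<close>

lemma prod_list_rotate1:
  fixes xs :: "'a::comm_monoid_mult list"
  shows "prod_list (rotate1 xs) = prod_list xs"
  by (cases xs) (simp_all add: mult.commute)

lemma prod_cyclic_adjacent:
  fixes f :: "'a \<Rightarrow> 'b::comm_monoid_mult"
  shows "(\<Prod>i<length vs. f (vs ! i) * f (vs ! ((i + 1) mod length vs)))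
           = prod_list (map f vs) ^ 2"
proof -
  have list_as_prod: "prod_list (map f xs) = (\<Prod>i<length xs. f (xs ! i))" for xs
    by (simp add: prod.list_conv_set_nth atLeast0LessThan)
  have "(\<Prod>i<length vs. f (vs ! ((i + 1) mod length vs))) = prod_list (map f (rotate1 vs))"
    by (simp add: list_as_prod nth_rotate1)
  also have "\<dots> = prod_list (map f vs)"
    by (simp add: prod_list_rotate1 flip: rotate1_map)
  finally show ?thesis
    by (simp add: prod.distrib list_as_prod power2_eq_square)
qed

lemma switch_edge_sign:
  assumes "e \<in> E" "ends e = {a, b}"
  shows "switch E ends v \<sigma> e
           = \<sigma> e * (if a = v then -1 else 1) * (if b = v then -1 else 1)"
  using assms by (cases "a = b") (auto simp: switch_def card_insert_if)

lemma circuit_sign_switch: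
  assumes circ: "is_circuit ends s es vs" and "s \<subseteq> E"
  shows "prod_list (map (switch E ends v \<sigma>) es) = prod_list (map \<sigma> es)"
proof -
  define k where "k = length es"
  define f where "f u = (if u = v then -1 else (1::int))" for u
  have len_vs: "length vs = k"
    using circ by (simp add: is_circuit_def k_def)
  have edge_sign: "switch E ends v \<sigma> (es ! i) = \<sigma> (es ! i) * (f (vs ! i) * f (vs ! ((i + 1) mod k)))"
    if "i < k" for i
  proof -
    have "es ! i \<in> E"
      using circ that \<open>s \<subseteq> E\<close> unfolding is_circuit_def k_def by (meson nth_mem subsetD)
    moreover have "ends (es ! i) = {vs ! i, vs ! ((i + 1) mod k)}"
      using circ that len_vs unfolding is_circuit_def k_def by auto
    ultimately show ?thesis
      by (simp add: switch_edge_sign f_def mult.assoc)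
  qed
  have "f u ^ 2 = 1" for u
    by (simp add: f_def)
  then have f_square: "prod_list (map f vs) ^ 2 = 1"
    by (simp add: prod_list_power comp_def map_replicate_const)
  have "prod_list (map (switch E ends v \<sigma>) es)
          = (\<Prod>i<k. \<sigma> (es ! i)) * (\<Prod>i<k. f (vs ! i) * f (vs ! ((i + 1) mod k)))"
    by (simp add: prod.list_conv_set_nth atLeast0LessThan k_def edge_sign prod.distrib)
  also have "\<dots> = (\<Prod>i<k. \<sigma> (es ! i)) * prod_list (map f vs) ^ 2"
    using prod_cyclic_adjacent[of f vs] by (simp add: len_vs)
  also have "\<dots> = prod_list (map \<sigma> es)"
    unfolding f_square by (simp add: prod.list_conv_set_nth atLeast0LessThan k_def)
  finally show ?thesis .
qed

lemma negative_circuit_switch: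
  "s \<subseteq> E \<Longrightarrow>
     negative_circuit ends (switch E ends v \<sigma>) s es vs = negative_circuit ends \<sigma> s es vs"
  unfolding negative_circuit_def using circuit_sign_switch by metis

lemma states_s_switch: "states_s V E ends (switch E ends v \<sigma>) = states_s V E ends \<sigma>"
  unfolding states_s_def enh_states_def balanced_comp_def
  by (auto simp: negative_circuit_switch simp del: Collect_case_prod)

lemma states_b_switch: "states_b V E ends (switch E ends v \<sigma>) = states_b V E ends \<sigma>"
  unfolding states_b_def enh_states_def balanced_sub_def
  by (auto simp: negative_circuit_switch simp del: Collect_case_prod)

lemma sg_equiv_states_eq:
  assumes "sg_equiv V E ends \<sigma>1 \<sigma>2"
  shows "states_s V E ends \<sigma>1 = states_s V E ends \<sigma>2"
    and "states_b V E ends \<sigma>1 = states_b V E ends \<sigma>2"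
  using assms unfolding sg_equiv_def
  by (induction rule: rtranclp_induct) (auto simp: states_s_switch states_b_switch)

theorem proposition5p3:
  fixes V :: "'v set" and E :: "'e::linorder set" and ends :: "'e \<Rightarrow> 'v set"
    and \<sigma>1 \<sigma>2 :: "'e \<Rightarrow> int"
  assumes "signed_graph V E ends \<sigma>1" and "signed_graph V E ends \<sigma>2"
    and "sg_equiv V E ends \<sigma>1 \<sigma>2"
  shows "\<forall>(i::int) (j::nat). H_s V E ends \<sigma>1 i j \<cong> H_s V E ends \<sigma>2 i j
                         \<and> H_b V E ends \<sigma>1 i j \<cong> H_b V E ends \<sigma>2 i j"
  using sg_equiv_states_eq[OF assms(3)] by (simp add: H_s_def H_b_def)

end
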